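(* Let $A$ be a unital $C^*$-algebra, $H$ a Hilbert space, and $\phi\colon A\to B(H)$ a positive linear map with $\phi(1)=1$. Suppose $\phi$ is of the form $\phi(x)=\sum_{i=1}^n\omega_i(x)b_i$ with $\omega_i$ states of $A$ and $b_i\in B(H)^+$. Let $e$ be a projection in the definite set $D_\phi$ of $\phi$ and put $f=1-e$. Then $\phi(e)$ and $\phi(f)$ are projections in $B(H)$ and $$\phi(x)=\phi(exe)+\phi(fxf)=\phi(e)\phi(x)\phi(e)+\phi(f)\phi(x)\phi(f)$$ for all $x\in A$. Hence $\phi(D_\phi)$ is an abelian $C^*$-algebra contained in the center of the von Neumann algebra generated by $\phi(A)$. In particular, if $\phi$ is faithful then $D_\phi$ is an abelian $C^*$-algebra.
   Context: For a positive linear map $\phi\colon A\to B$ of norm at most $1$ between $C^*$-algebras, the (self-adjoint) definite set $D_\phi$ is the set of self-adjoint $a\in A$ with $\phi(a^2)=\phi(a)^2$. $\phi$ is faithful if $\phi(x^*x)=0$ implies $x=0$. *)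

theory Defs
  imports "HOL-Analysis.Analysis"
begin

class complex_vector = real_vector +
  fixes scaleC :: "complex \<Rightarrow> 'a \<Rightarrow> 'a"
  assumes scaleC_add_right: "scaleC a (x + y) = scaleC a x + scaleC a y"
    and scaleC_add_left: "scaleC (a + b) x = scaleC a x + scaleC b x"
    and scaleC_scaleC: "scaleC a (scaleC b x) = scaleC (a * b) x"
    and scaleC_one: "scaleC 1 x = x"
    and scaleR_scaleC: "scaleR r x = scaleC (complex_of_real r) x"

class complex_normed_vector = complex_vector + real_normed_vector +
  assumes norm_scaleC: "norm (scaleC a x) = cmod a * norm x"

class chilbert_space = complex_normed_vector + banach +
  fixes cinner :: "'a \<Rightarrow> 'a \<Rightarrow> complex"
  assumes cinner_add_left: "cinner (x + y) z = cinner x z + cinner y z"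
    and cinner_scaleC_left: "cinner (scaleC c x) y = cnj c * cinner x y"
    and cinner_commute: "cinner y x = cnj (cinner x y)"
    and norm_cinner: "norm x = sqrt (Re (cinner x x))"

class cstar_algebra = complex_normed_vector + real_normed_algebra_1 + banach +
  fixes cstar :: "'a \<Rightarrow> 'a"
  assumes cstar_involutive: "cstar (cstar x) = x"
    and cstar_add: "cstar (x + y) = cstar x + cstar y"
    and cstar_scaleC: "cstar (scaleC c x) = scaleC (cnj c) (cstar x)"
    and cstar_mult: "cstar (x * y) = cstar y * cstar x"
    and cstar_identity: "norm (cstar x * x) = norm x * norm x"
    and scaleC_mult_left: "scaleC c x * y = scaleC c (x * y)"
    and mult_scaleC_right: "x * scaleC c y = scaleC c (x * y)"

definition cstar_positive :: "'a::cstar_algebra \<Rightarrow> bool" where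
  "cstar_positive a \<longleftrightarrow> (\<exists>y. a = cstar y * y)"

definition cstar_projection :: "'a::cstar_algebra \<Rightarrow> bool" where
  "cstar_projection e \<longleftrightarrow> e * e = e \<and> cstar e = e"

definition is_state :: "('a::cstar_algebra \<Rightarrow> complex) \<Rightarrow> bool" where
  "is_state \<omega> \<longleftrightarrow>
     (\<forall>x y. \<omega> (x + y) = \<omega> x + \<omega> y) \<and>
     (\<forall>c x. \<omega> (scaleC c x) = c * \<omega> x) \<and>
     (\<forall>a. cstar_positive a \<longrightarrow> Im (\<omega> a) = 0 \<and> Re (\<omega> a) \<ge> 0) \<and>
     \<omega> 1 = 1"

definition cstar_subalgebra :: "'a::cstar_algebra set \<Rightarrow> bool" where
  "cstar_subalgebra M \<longleftrightarrow>
     0 \<in> M \<and>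
     (\<forall>a\<in>M. \<forall>b\<in>M. a + b \<in> M \<and> a * b \<in> M) \<and>
     (\<forall>c. \<forall>a\<in>M. scaleC c a \<in> M) \<and>
     (\<forall>a\<in>M. cstar a \<in> M) \<and>
     closed M"

definition bounded_op :: "('h::chilbert_space \<Rightarrow> 'h) \<Rightarrow> bool" where
  "bounded_op T \<longleftrightarrow>
     (\<forall>x y. T (x + y) = T x + T y) \<and>
     (\<forall>c x. T (scaleC c x) = scaleC c (T x)) \<and>
     (\<exists>K. \<forall>x. norm (T x) \<le> K * norm x)"

definition op_positive :: "('h::chilbert_space \<Rightarrow> 'h) \<Rightarrow> bool" where
  "op_positive T \<longleftrightarrow> bounded_op T \<and>
     (\<forall>x. Im (cinner x (T x)) = 0 \<and> Re (cinner x (T x)) \<ge> 0)"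

definition op_selfadjoint :: "('h::chilbert_space \<Rightarrow> 'h) \<Rightarrow> bool" where
  "op_selfadjoint T \<longleftrightarrow> bounded_op T \<and> (\<forall>x y. cinner (T x) y = cinner x (T y))"

definition op_projection :: "('h::chilbert_space \<Rightarrow> 'h) \<Rightarrow> bool" where
  "op_projection T \<longleftrightarrow> op_selfadjoint T \<and> T \<circ> T = T"

definition op_cstar_subalgebra :: "('h::chilbert_space \<Rightarrow> 'h) set \<Rightarrow> bool" where
  "op_cstar_subalgebra C \<longleftrightarrow>
     (\<forall>T\<in>C. bounded_op T) \<and>
     (\<lambda>x. 0) \<in> C \<and>
     (\<forall>S\<in>C. \<forall>T\<in>C. (\<lambda>x. S x + T x) \<in> C \<and> S \<circ> T \<in> C) \<and>
     (\<forall>c. \<forall>T\<in>C. (\<lambda>x. scaleC c (T x)) \<in> C) \<and>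
     (\<forall>T\<in>C. \<exists>S\<in>C. \<forall>x y. cinner (T x) y = cinner x (S y)) \<and>
     (\<forall>T Ts. (\<forall>n. Ts n \<in> C) \<and> bounded_op T \<and>
        (\<lambda>n. onorm (\<lambda>x. Ts n x - T x)) \<longlonglongrightarrow> 0 \<longrightarrow> T \<in> C)"

definition commutant :: "('h::chilbert_space \<Rightarrow> 'h) set \<Rightarrow> ('h \<Rightarrow> 'h) set" where
  "commutant S = {T. bounded_op T \<and> (\<forall>X\<in>S. T \<circ> X = X \<circ> T)}"

text \<open>Von Neumann algebra generated by a self-adjoint set containing the identity:
  by the bicommutant theorem it is the double commutant.\<close>
definition vN_generated :: "('h::chilbert_space \<Rightarrow> 'h) set \<Rightarrow> ('h \<Rightarrow> 'h) set" where
  "vN_generated S = commutant (commutant S)"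

definition center :: "('h::chilbert_space \<Rightarrow> 'h) set \<Rightarrow> ('h \<Rightarrow> 'h) set" where
  "center M = M \<inter> commutant M"

definition definite_set :: "('a::cstar_algebra \<Rightarrow> 'h::chilbert_space \<Rightarrow> 'h) \<Rightarrow> 'a set" where
  "definite_set \<phi> = {a. cstar a = a \<and> \<phi> (a * a) = \<phi> a \<circ> \<phi> a}"

definition faithful_map :: "('a::cstar_algebra \<Rightarrow> 'h::chilbert_space \<Rightarrow> 'h) \<Rightarrow> bool" where
  "faithful_map \<phi> \<longleftrightarrow> (\<forall>x. \<phi> (cstar x * x) = (\<lambda>h. 0) \<longrightarrow> x = 0)"

end

theory Submission
  imports Defs "HOL-Computational_Algebra.Formal_Power_Series"
begin

text \<open>Write \<open>\<phi> = \<Sum>\<^sub>i \<omega>\<^sub>i(\<cdot>) b\<^sub>i\<close>, so that \<open>\<Sum>\<^sub>i b\<^sub>i = 1\<close>. For self-adjoint \<open>a\<close> and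
  \<open>y\<^sub>i = \<omega>\<^sub>i(a) h - \<phi>(a) h\<close> one has
  \<open>\<langle>h, (\<phi>(a\<^sup>2) - \<phi>(a)\<^sup>2) h\<rangle> = \<Sum>\<^sub>i (\<omega>\<^sub>i(a\<^sup>2) - \<omega>\<^sub>i(a)\<^sup>2) \<langle>h, b\<^sub>i h\<rangle> + \<langle>y\<^sub>i, b\<^sub>i y\<^sub>i\<rangle>\<close>,
  a sum of nonnegative terms. Hence \<open>a\<close> is definite iff for every \<open>i\<close> with \<open>b\<^sub>i \<noteq> 0\<close> the
  element \<open>a\<close> lies in the multiplicative domain of \<open>\<omega>\<^sub>i\<close> and \<open>\<phi>(a)\<close> acts on the range of
  \<open>b\<^sub>i\<close> as the scalar \<open>\<omega>\<^sub>i(a)\<close>. Imposed on arbitrary elements in the two-sided form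
  \<open>b\<^sub>i \<phi>(z) = \<phi>(z) b\<^sub>i = \<omega>\<^sub>i(z) b\<^sub>i\<close>, this condition defines
  a norm-closed *-subalgebra of \<open>A\<close> on which each such \<open>\<omega>\<^sub>i\<close> is a character and \<open>\<phi>\<close> is
  a *-homomorphism into the commutant of \<open>\<phi>(A)\<close>; its image is norm-closed because it is
  parametrised by finitely many scalars. For a definite projection \<open>e\<close>, \<open>\<phi>(e)\<close> is then a
  central projection with \<open>\<phi>(e) + \<phi>(1 - e) = 1\<close>, which gives the decomposition of \<open>\<phi>\<close>;
  if \<open>\<phi>\<close> is faithful, commutators of the subalgebra are killed by all the characters
  \<open>\<omega>\<^sub>i\<close>, hence vanish.\<close>

section \<open>Complex vector spaces, Hilbert spaces and C*-algebras\<close>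

lemma scaleC_zero_left [simp]: "scaleC 0 (x::'a::complex_vector) = 0"
  using scaleR_scaleC[of 0 x] by simp

lemma scaleC_zero_right [simp]: "scaleC a (0::'a::complex_vector) = 0"
  using scaleC_add_right[of a "0::'a" 0] by simp

lemma scaleC_minus_left: "scaleC (- a) (x::'a::complex_vector) = - scaleC a x"
  using scaleC_add_left[of a "-a" x] by (simp add: eq_neg_iff_add_eq_0 add.commute)

lemma scaleC_minus_right: "scaleC a (- x::'a::complex_vector) = - scaleC a x"
  using scaleC_add_right[of a x "-x"] by (simp add: eq_neg_iff_add_eq_0 add.commute)

lemma scaleC_diff_left: "scaleC (a - b) (x::'a::complex_vector) = scaleC a x - scaleC b x"
  using scaleC_add_left[of a "-b" x] by (simp add: scaleC_minus_left)

lemma scaleC_diff_right: "scaleC a (x - y::'a::complex_vector) = scaleC a x - scaleC a y"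
  using scaleC_add_right[of a x "-y"] by (simp add: scaleC_minus_right)

lemma scaleC_sum_right: "scaleC a (sum f A) = (\<Sum>i\<in>A. scaleC a (f i::'a::complex_vector))"
  by (induct A rule: infinite_finite_induct) (auto simp: scaleC_add_right)

lemma scaleC_of_real: "scaleC (complex_of_real r) (x::'a::complex_vector) = scaleR r x"
  by (simp add: scaleR_scaleC)

lemma bounded_bilinear_scaleC:
  "bounded_bilinear (scaleC :: complex \<Rightarrow> 'a::complex_normed_vector \<Rightarrow> 'a)"
  unfolding bounded_bilinear_def
proof (intro conjI allI)
  show "scaleC (r *\<^sub>R a) b = r *\<^sub>R scaleC a (b::'a)" for r a b
    by (simp add: scaleR_scaleC scaleC_scaleC scaleR_conv_of_real)
  show "scaleC a (r *\<^sub>R b) = r *\<^sub>R scaleC a (b::'a)" for r a b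
    by (simp add: scaleR_scaleC scaleC_scaleC mult.commute)
  show "\<exists>K. \<forall>a b. norm (scaleC a (b::'a)) \<le> norm a * norm b * K"
    by (rule exI[of _ 1]) (simp add: norm_scaleC)
qed (simp_all add: scaleC_add_left scaleC_add_right)

lemmas tendsto_scaleC = bounded_bilinear.tendsto[OF bounded_bilinear_scaleC]

lemma cinner_add_right: "cinner x (y + z::'a::chilbert_space) = cinner x y + cinner x z"
  by (metis cinner_commute cinner_add_left complex_cnj_add)

lemma cinner_scaleC_right: "cinner x (scaleC c y::'a::chilbert_space) = c * cinner x y"
  by (metis cinner_commute cinner_scaleC_left complex_cnj_mult complex_cnj_cnj)

lemma cinner_zero_left [simp]: "cinner 0 (y::'a::chilbert_space) = 0"
  using cinner_add_left[of 0 0 y] by simp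

lemma cinner_zero_right [simp]: "cinner x (0::'a::chilbert_space) = 0"
  using cinner_add_right[of x 0 0] by simp

lemma cinner_diff_left: "cinner (x - y) (z::'a::chilbert_space) = cinner x z - cinner y z"
  using cinner_add_left[of "x - y" y z] by simp

lemma cinner_diff_right: "cinner x (y - z::'a::chilbert_space) = cinner x y - cinner x z"
  using cinner_add_right[of x "y - z" z] by simp

lemma cinner_sum_left: "cinner (sum f A) (x::'a::chilbert_space) = (\<Sum>i\<in>A. cinner (f i) x)"
  by (induct A rule: infinite_finite_induct) (auto simp: cinner_add_left)

lemma cinner_sum_right: "cinner x (sum f A) = (\<Sum>i\<in>A. cinner x (f i::'a::chilbert_space))"
  by (induct A rule: infinite_finite_induct) (auto simp: cinner_add_right)

lemma cinner_self: "cinner x (x::'a::chilbert_space) = complex_of_real ((norm x)\<^sup>2)"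
proof -
  have "Im (cinner x x) = 0"
    using cinner_commute[of x x] by (metis Im_complex_of_real Reals_cnj_iff complex_is_Real_iff)
  moreover have "Re (cinner x x) = (norm x)\<^sup>2"
    using norm_cinner[of x] by (metis norm_ge_zero real_sqrt_ge_0_iff real_sqrt_pow2)
  ultimately show ?thesis by (simp add: complex_eq_iff)
qed

lemma cinner_ext_left: "(\<And>y. cinner u y = cinner v y) \<Longrightarrow> u = (v::'a::chilbert_space)"
  by (metis cinner_diff_left cinner_self norm_eq_zero of_real_eq_0_iff right_minus_eq
      zero_less_power2 less_numeral_extra(3))

lemma cstar_zero [simp]: "cstar (0::'a::cstar_algebra) = 0"
  using cstar_add[of "0::'a" 0] by simp

lemma cstar_one [simp]: "cstar (1::'a::cstar_algebra) = 1"
  using cstar_mult[of "cstar 1" "1::'a"] by (simp add: cstar_involutive)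

lemma cstar_scaleR: "cstar (scaleR r (x::'a::cstar_algebra)) = scaleR r (cstar x)"
  by (simp add: scaleR_scaleC cstar_scaleC)

lemma cstar_minus: "cstar (- x::'a::cstar_algebra) = - cstar x"
  using cstar_scaleR[of "-1" x] by simp

lemma cstar_diff: "cstar (x - y::'a::cstar_algebra) = cstar x - cstar y"
  using cstar_add[of x "-y"] by (simp add: cstar_minus)

lemma norm_cstar: "norm (cstar x) = norm (x::'a::cstar_algebra)"
proof -
  have le: "norm y \<le> norm (cstar y)" for y :: 'a
  proof (cases "y = 0")
    case False
    have "norm y * norm y = norm (cstar y * y)" by (rule cstar_identity[symmetric])
    also have "\<dots> \<le> norm (cstar y) * norm y" by (rule norm_mult_ineq)
    finally show ?thesis using False by simp
  qed simp
  show ?thesis using le[of x] le[of "cstar x"] by (simp add: cstar_involutive)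
qed

lemma bounded_linear_cstar: "bounded_linear (cstar::'a::cstar_algebra \<Rightarrow> 'a)"
  by (rule bounded_linear_intro[of _ 1]) (simp_all add: cstar_add cstar_scaleR norm_cstar)

lemma cstar_power: "cstar a = a \<Longrightarrow> cstar (a ^ k) = (a::'a::cstar_algebra) ^ k"
  by (induct k) (simp_all add: cstar_mult power_commutes)

section \<open>States\<close>

lemma state_add: "is_state \<omega> \<Longrightarrow> \<omega> (x + y) = \<omega> x + \<omega> y"
  by (simp add: is_state_def)

lemma state_scaleC: "is_state \<omega> \<Longrightarrow> \<omega> (scaleC c x) = c * \<omega> x"
  by (simp add: is_state_def)

lemma state_one: "is_state \<omega> \<Longrightarrow> \<omega> 1 = 1"
  by (simp add: is_state_def)

lemma state_nonneg: "is_state \<omega> \<Longrightarrow> Im (\<omega> (cstar y * y)) = 0 \<and> Re (\<omega> (cstar y * y)) \<ge> 0"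
  unfolding is_state_def cstar_positive_def by blast

lemma state_zero: "is_state \<omega> \<Longrightarrow> \<omega> 0 = 0"
  using state_scaleC[of \<omega> 0 0] by simp

lemma state_minus: "is_state \<omega> \<Longrightarrow> \<omega> (- x) = - \<omega> x"
  using state_scaleC[of \<omega> "-1" x] by (simp add: scaleC_minus_left scaleC_one)

lemma state_diff: "is_state \<omega> \<Longrightarrow> \<omega> (x - y) = \<omega> x - \<omega> y"
  using state_add[of \<omega> x "-y"] state_minus[of \<omega> y] by simp

lemma state_scaleR: "is_state \<omega> \<Longrightarrow> \<omega> (scaleR r x) = complex_of_real r * \<omega> x"
  using state_scaleC[of \<omega> "complex_of_real r" x] by (simp add: scaleC_of_real)

lemma state_selfadjoint_real:
  assumes w: "is_state \<omega>" and a: "cstar a = a"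
  shows "Im (\<omega> a) = 0"
proof -
  have "cstar (1 + a) = 1 + a" "cstar (1 - a) = 1 - a" using a by (simp_all add: cstar_add cstar_diff)
  moreover have "(1 + a) * (1 + a) - (1 - a) * (1 - a) = a + a + a + a"
    by (simp add: algebra_simps)
  ultimately have "\<omega> (a + a + a + a) = \<omega> (cstar (1 + a) * (1 + a)) - \<omega> (cstar (1 - a) * (1 - a))"
    by (metis state_diff[OF w])
  hence "4 * \<omega> a = \<omega> (cstar (1 + a) * (1 + a)) - \<omega> (cstar (1 - a) * (1 - a))"
    by (simp add: state_add[OF w])
  hence "Im (4 * \<omega> a) = 0"
    using state_nonneg[OF w, of "1 + a"] state_nonneg[OF w, of "1 - a"] by simp
  thus ?thesis by simp
qed

lemma state_selfadjoint_cnj: "is_state \<omega> \<Longrightarrow> cstar a = a \<Longrightarrow> cnj (\<omega> a) = \<omega> a"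
  using state_selfadjoint_real[of \<omega> a] by (simp add: complex_eq_iff)

lemma state_cstar:
  assumes w: "is_state \<omega>"
  shows "\<omega> (cstar x) = cnj (\<omega> x)"
proof -
  have u: "cstar (x + cstar x) = x + cstar x" by (simp add: cstar_add cstar_involutive add.commute)
  have v: "cstar (scaleC \<i> (x - cstar x)) = scaleC \<i> (x - cstar x)"
    by (simp add: cstar_scaleC cstar_diff cstar_involutive)
      (metis scaleC_minus_left scaleC_minus_right minus_diff_eq)
  have "Im (\<omega> x + \<omega> (cstar x)) = 0"
    using state_selfadjoint_real[OF w u] state_add[OF w] by simp
  moreover have "Im (\<i> * (\<omega> x - \<omega> (cstar x))) = 0"
    using state_selfadjoint_real[OF w v] state_scaleC[OF w] state_diff[OF w] by simp
  ultimately show ?thesis by (simp add: complex_eq_iff)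
qed

lemma cstar_mult_expand:
  "cstar (y + scaleC t z) * (y + scaleC t z) =
    cstar y * y + scaleC t (cstar y * z) + scaleC (cnj t) (cstar z * y)
      + scaleC (t * cnj t) (cstar z * (z::'a::cstar_algebra))"
  by (simp add: cstar_add cstar_scaleC distrib_left distrib_right scaleC_mult_left
      mult_scaleC_right scaleC_scaleC add.assoc scaleC_add_right)

text \<open>The Cauchy--Schwarz argument: the quadratic form
  \<open>t \<mapsto> \<omega> ((y + t z)\<^sup>* (y + t z))\<close> is nonnegative with vanishing quadratic term,
  so its linear term vanishes.\<close>
lemma state_cstar_mult_eq_0:
  assumes w: "is_state \<omega>" and z: "\<omega> (cstar z * z) = 0"
  shows "\<omega> (cstar y * z) = 0"
proof (rule ccontr)
  let ?c = "\<omega> (cstar y * z)" and ?A = "Re (\<omega> (cstar y * y))"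
  assume c: "?c \<noteq> 0"
  have zy: "\<omega> (cstar z * y) = cnj ?c"
    using state_cstar[OF w, of "cstar y * z"] by (simp add: cstar_mult cstar_involutive)
  have linear: "?A + 2 * Re (t * ?c) \<ge> 0" for t
  proof -
    have "Re (\<omega> (cstar (y + scaleC t z) * (y + scaleC t z))) \<ge> 0" using state_nonneg[OF w] by blast
    also have "\<omega> (cstar (y + scaleC t z) * (y + scaleC t z)) =
       \<omega> (cstar y * y) + t * ?c + cnj t * cnj ?c"
      unfolding cstar_mult_expand by (simp add: state_add[OF w] state_scaleC[OF w] zy z)
    finally show ?thesis by simp
  qed
  define K where "K = (cmod ?c)\<^sup>2"
  have K: "K > 0" using c by (simp add: K_def)
  define r where "r = (?A + 1) / (2 * K)"
  have "Re (complex_of_real (- r) * cnj ?c * ?c) = - r * K"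
    unfolding K_def cmod_power2
    by (simp add: complex_mult_cnj mult.assoc power2_eq_square del: of_real_power)
  hence "?A + 2 * (- r * K) \<ge> 0" using linear[of "complex_of_real (- r) * cnj ?c"] by simp
  moreover have "2 * (r * K) = ?A + 1" using K unfolding r_def by (simp add: field_simps)
  ultimately show False by simp
qed

lemma state_variance:
  assumes w: "is_state \<omega>" and a: "cstar a = a"
  defines "z \<equiv> a - scaleC (\<omega> a) 1"
  shows "\<omega> (cstar z * z) = \<omega> (a * a) - (\<omega> a)\<^sup>2"
proof -
  let ?l = "\<omega> a"
  have "cstar z = z"
    unfolding z_def by (simp add: cstar_diff cstar_scaleC a state_selfadjoint_cnj[OF w a])
  moreover have "z * z = a * a - scaleC ?l a - scaleC ?l a + scaleC (?l * ?l) 1"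
    unfolding z_def
    by (simp add: algebra_simps scaleC_mult_left mult_scaleC_right scaleC_scaleC scaleC_diff_right)
  ultimately show ?thesis
    by (simp add: state_add[OF w] state_diff[OF w] state_scaleC[OF w] state_one[OF w] power2_eq_square)
qed

lemma state_variance_nonneg:
  assumes "is_state \<omega>" and "cstar a = a"
  shows "Im (\<omega> (a * a) - (\<omega> a)\<^sup>2) = 0 \<and> Re (\<omega> (a * a) - (\<omega> a)\<^sup>2) \<ge> 0"
  using state_nonneg[OF assms(1)] state_variance[OF assms] by metis

definition mult_domain :: "('a::ring_1 \<Rightarrow> complex) \<Rightarrow> 'a set" where
  "mult_domain \<omega> = {a. \<forall>x. \<omega> (x * a) = \<omega> x * \<omega> a \<and> \<omega> (a * x) = \<omega> a * \<omega> x}"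

lemma mult_domainD:
  "a \<in> mult_domain \<omega> \<Longrightarrow> \<omega> (x * a) = \<omega> x * \<omega> a"
  "a \<in> mult_domain \<omega> \<Longrightarrow> \<omega> (a * x) = \<omega> a * \<omega> x"
  by (simp_all add: mult_domain_def)

lemma state_mult_domainI:
  assumes w: "is_state \<omega>" and a: "cstar a = a" and sq: "\<omega> (a * a) = (\<omega> a)\<^sup>2"
  shows "a \<in> mult_domain \<omega>"
proof -
  define z where "z = a - scaleC (\<omega> a) 1"
  have zz: "\<omega> (cstar z * z) = 0" using state_variance[OF w a] sq unfolding z_def by simp
  have "\<omega> (x * z) = 0" for x
    using state_cstar_mult_eq_0[OF w zz, of "cstar x"] by (simp add: cstar_involutive)
  moreover have "\<omega> (z * x) = 0" for x
  proof -
    have "cstar z = z"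
      by (simp add: z_def cstar_diff cstar_scaleC a state_selfadjoint_cnj[OF w a])
    thus ?thesis using state_cstar[OF w, of "cstar x * z"] state_cstar_mult_eq_0[OF w zz, of x]
      by (simp add: cstar_mult cstar_involutive)
  qed
  ultimately show ?thesis unfolding mult_domain_def z_def
    by (simp add: right_diff_distrib left_diff_distrib mult_scaleC_right scaleC_mult_left
        state_diff[OF w] state_scaleC[OF w] mult.commute)
qed

lemma mult_domain_one: "\<omega> 1 = 1 \<Longrightarrow> 1 \<in> mult_domain \<omega>"
  by (simp add: mult_domain_def)

lemma mult_domain_mult:
  "a \<in> mult_domain \<omega> \<Longrightarrow> c \<in> mult_domain \<omega> \<Longrightarrow> a * c \<in> mult_domain \<omega>"
  unfolding mult_domain_def by (simp add: mult.assoc[symmetric]) (simp add: mult.assoc)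

lemma mult_domain_add:
  "is_state \<omega> \<Longrightarrow> a \<in> mult_domain \<omega> \<Longrightarrow> c \<in> mult_domain \<omega> \<Longrightarrow> a + c \<in> mult_domain \<omega>"
  unfolding mult_domain_def by (simp add: distrib_left distrib_right state_add algebra_simps)

lemma mult_domain_scaleC:
  "is_state \<omega> \<Longrightarrow> a \<in> mult_domain \<omega> \<Longrightarrow> scaleC t a \<in> mult_domain \<omega>"
  unfolding mult_domain_def by (simp add: scaleC_mult_left mult_scaleC_right state_scaleC)

lemma mult_domain_cstar:
  assumes w: "is_state \<omega>" and a: "a \<in> mult_domain \<omega>"
  shows "cstar a \<in> mult_domain \<omega>"
proof -
  have "\<omega> (x * cstar a) = cnj (\<omega> (a * cstar x))" "\<omega> (cstar a * x) = cnj (\<omega> (cstar x * a))" for x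
    using state_cstar[OF w, of "a * cstar x"] state_cstar[OF w, of "cstar x * a"]
    by (simp_all add: cstar_mult cstar_involutive)
  thus ?thesis using mult_domainD[OF a]
    by (simp add: mult_domain_def state_cstar[OF w] mult.commute)
qed

section \<open>Continuity of states\<close>

lemma abs_gbinomial_half_le_1: "\<bar>(1/2::real) gchoose k\<bar> \<le> 1"
proof (induct k)
  case (Suc k)
  have "(1/2::real) gchoose (Suc k) = ((1/2 - real k) / (real k + 1)) * ((1/2) gchoose k)"
    using gbinomial_mult_1[of "1/2::real" k] by (simp add: field_simps)
  hence "\<bar>(1/2::real) gchoose (Suc k)\<bar> = \<bar>(1/2 - real k) / (real k + 1)\<bar> * \<bar>(1/2) gchoose k\<bar>"
    by (simp add: abs_mult)
  also have "\<dots> \<le> 1 * 1"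
    using Suc by (intro mult_mono) (auto simp: abs_if field_simps)
  finally show ?case by simp
qed simp

text \<open>The coefficients of the binomial series of \<open>\<surd>(1 - t)\<close> square to those of \<open>1 - t\<close>.\<close>
lemma sqrt_series_coeff_square:
  defines "c \<equiv> \<lambda>k. ((1/2::real) gchoose k) * (-1) ^ k"
  shows "(\<Sum>i\<le>k. c i * c (k - i)) = (if k = 0 then 1 else if k = 1 then -1 else 0)"
proof -
  have "c i * c (k - i) = (-1) ^ k * (((1/2) gchoose i) * ((1/2) gchoose (k - i)))" if "i \<le> k" for i
  proof -
    have "(-1::real) ^ i * (-1) ^ (k - i) = (-1) ^ k" using that by (simp add: power_add[symmetric])
    thus ?thesis unfolding c_def by (simp add: algebra_simps)
  qed
  hence "(\<Sum>i\<le>k. c i * c (k - i)) = (-1) ^ k * (\<Sum>i\<le>k. ((1/2) gchoose i) * ((1/2) gchoose (k - i)))"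
    by (simp add: sum_distrib_left)
  also have "\<dots> = (-1) ^ k * ((1::real) gchoose k)"
    using gbinomial_Vandermonde[of "1/2::real" "1/2" k] by (simp add: atLeast0AtMost)
  also have "(1::real) gchoose k = of_nat (1 choose k)"
    by (metis binomial_gbinomial of_nat_1)
  finally show ?thesis by (cases k) (auto simp: binomial_eq_0)
qed

lemma cstar_sqrt_one_minus:
  fixes a :: "'a::cstar_algebra"
  assumes a: "cstar a = a" and n: "norm a < 1"
  shows "\<exists>y. cstar y * y = 1 - a"
proof -
  define c where "c k = ((1/2::real) gchoose k) * (-1) ^ k" for k
  define f where "f k = c k *\<^sub>R a ^ k" for k
  have "norm (f k) \<le> norm a ^ k" for k
  proof -
    have "norm (f k) = \<bar>c k\<bar> * norm (a ^ k)" unfolding f_def by simp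
    also have "\<dots> \<le> 1 * norm a ^ k"
      using abs_gbinomial_half_le_1[of k] norm_power_ineq[of a k]
      by (intro mult_mono) (auto simp: c_def abs_mult)
    finally show ?thesis by simp
  qed
  hence summable: "summable (\<lambda>k. norm (f k))"
    by (intro summable_comparison_test[OF _ summable_geometric[of "norm a"]]) (use n in auto)
  have "(\<Sum>i\<le>k. f i * f (k - i)) = (\<Sum>i\<le>k. c i * c (k - i)) *\<^sub>R a ^ k" for k
  proof -
    have "f i * f (k - i) = (c i * c (k - i)) *\<^sub>R a ^ k" if "i \<le> k" for i
      using that unfolding f_def by (simp add: power_add[symmetric])
    thus ?thesis by (simp add: scaleR_sum_left)
  qed
  hence "(\<Sum>i\<le>k. f i * f (k - i)) = (if k = 0 then 1 else 0) + (if k = 1 then - a else 0)" for k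
    unfolding c_def sqrt_series_coeff_square by auto
  moreover have "(\<lambda>k. (if k = 0 then 1 else 0) + (if k = 1 then - a else 0)) sums (1 + - a)"
    by (intro sums_add) (use sums_single[of 0 "\<lambda>_. 1::'a"] sums_single[of 1 "\<lambda>_. -a"] in auto)
  ultimately have "(\<lambda>k. \<Sum>i\<le>k. f i * f (k - i)) sums (1 - a)" by simp
  hence square: "suminf f * suminf f = 1 - a"
    using Cauchy_product_sums[OF summable summable] sums_unique2 by blast
  have "cstar (suminf f) = suminf (\<lambda>k. cstar (f k))"
    by (rule bounded_linear.suminf[OF bounded_linear_cstar summable_norm_cancel[OF summable]])
  also have "(\<lambda>k. cstar (f k)) = f" unfolding f_def by (auto simp: cstar_scaleR cstar_power[OF a])
  finally show ?thesis using square by metis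
qed

lemma state_le_1:
  assumes w: "is_state \<omega>" and a: "cstar a = a" and n: "norm a < 1"
  shows "Re (\<omega> a) \<le> 1"
proof -
  obtain y where "cstar y * y = 1 - a" using cstar_sqrt_one_minus[OF a n] by blast
  hence "Re (\<omega> (1 - a)) \<ge> 0" using state_nonneg[OF w, of y] by simp
  thus ?thesis by (simp add: state_diff[OF w] state_one[OF w])
qed

lemma state_norm_le_selfadjoint:
  assumes w: "is_state \<omega>" and a: "cstar a = a"
  shows "cmod (\<omega> a) \<le> norm a"
proof -
  have "\<bar>Re (\<omega> a)\<bar> \<le> t" if t: "norm a < t" for t
  proof -
    have t0: "t > 0" using t norm_ge_zero[of a] by linarith
    have "Re (\<omega> (scaleR (1/t) a)) \<le> 1" "Re (\<omega> (scaleR (1/t) (- a))) \<le> 1"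
      using t t0 by (intro state_le_1[OF w]; simp add: cstar_scaleR cstar_minus a field_simps)+
    thus ?thesis using t0
      by (simp add: state_scaleR[OF w] state_minus[OF w] field_simps abs_if)
  qed
  hence "\<bar>Re (\<omega> a)\<bar> \<le> norm a" by (rule dense_ge)
  thus ?thesis using state_selfadjoint_real[OF w a] by (simp add: cmod_def)
qed

definition re_part :: "'a::cstar_algebra \<Rightarrow> 'a" where
  "re_part z = scaleR (1/2) (z + cstar z)"

lemma cstar_re_part: "cstar (re_part z) = re_part z"
  by (simp add: re_part_def cstar_scaleR cstar_add cstar_involutive add.commute)

lemma norm_re_part_le: "norm (re_part z) \<le> norm z"
  using norm_triangle_ineq[of z "cstar z"] by (simp add: re_part_def norm_cstar)

lemma re_part_decomp: "re_part z + scaleC \<i> (re_part (scaleC (- \<i>) z)) = z"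
proof -
  have "scaleC \<i> (re_part (scaleC (- \<i>) z)) =
      scaleC (\<i> * (1/2) * - \<i>) z + scaleC (\<i> * (1/2) * \<i>) (cstar z)"
    by (simp add: re_part_def cstar_scaleC scaleR_scaleC scaleC_add_right scaleC_scaleC)
  also have "\<dots> = scaleR (1/2) (z - cstar z)"
    by (simp add: scaleR_scaleC scaleC_diff_right scaleC_minus_left)
  moreover have "re_part z + scaleR (1/2) (z - cstar z) = scaleR (1/2) (z + z)"
    unfolding re_part_def by (simp only: scaleR_add_right[symmetric]) (simp add: algebra_simps)
  ultimately show ?thesis by (simp add: scaleR_add_left[symmetric])
qed

lemma state_bounded_linear:
  assumes w: "is_state \<omega>"
  shows "bounded_linear \<omega>"
proof (rule bounded_linear_intro[of _ 2])
  show "cmod (\<omega> x) \<le> norm x * 2" for x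
  proof -
    let ?r = "re_part x" and ?s = "re_part (scaleC (- \<i>) x)"
    have "\<omega> x = \<omega> ?r + \<i> * \<omega> ?s"
      using re_part_decomp[of x] by (metis state_add[OF w] state_scaleC[OF w])
    hence "cmod (\<omega> x) \<le> cmod (\<omega> ?r) + cmod (\<omega> ?s)"
      by (metis norm_triangle_ineq norm_mult norm_ii mult_1)
    also have "\<dots> \<le> norm ?r + norm ?s"
      by (intro add_mono state_norm_le_selfadjoint[OF w] cstar_re_part)
    also have "\<dots> \<le> norm x + norm x"
      using norm_re_part_le[of x] norm_re_part_le[of "scaleC (- \<i>) x"] by (simp add: norm_scaleC)
    finally show ?thesis by simp
  qed
  show "\<omega> (r *\<^sub>R x) = r *\<^sub>R \<omega> x" for r x
    using state_scaleR[OF w] by (simp add: scaleR_conv_of_real)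
qed (simp add: state_add[OF w])

section \<open>Bounded operators and limits\<close>

lemma bounded_op_apply_add: "bounded_op T \<Longrightarrow> T (x + y) = T x + T y"
  by (simp add: bounded_op_def)

lemma bounded_op_apply_scaleC: "bounded_op T \<Longrightarrow> T (scaleC c x) = scaleC c (T x)"
  by (simp add: bounded_op_def)

lemma bounded_op_apply_zero: "bounded_op T \<Longrightarrow> T 0 = 0"
  using bounded_op_apply_scaleC[of T 0 0] by simp

lemma bounded_op_apply_diff: "bounded_op T \<Longrightarrow> T (x - y) = T x - T y"
  using bounded_op_apply_add[of T "x - y" y] by simp

lemma bounded_op_apply_sum: "bounded_op T \<Longrightarrow> T (sum f A) = (\<Sum>i\<in>A. T (f i))"
  by (induct A rule: infinite_finite_induct) (auto simp: bounded_op_apply_add bounded_op_apply_zero)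

lemma bounded_op_bounded_linear: "bounded_op T \<Longrightarrow> bounded_linear T"
proof -
  assume T: "bounded_op T"
  then obtain K where "\<And>x. norm (T x) \<le> K * norm x" unfolding bounded_op_def by blast
  thus ?thesis
    by (intro bounded_linear_intro[of _ K])
      (auto simp: bounded_op_apply_add[OF T] bounded_op_apply_scaleC[OF T] mult.commute
        scaleC_of_real[symmetric])
qed

lemma bounded_op_add: "bounded_op S \<Longrightarrow> bounded_op T \<Longrightarrow> bounded_op (\<lambda>h. S h + T h)"
proof -
  assume S: "bounded_op S" and T: "bounded_op T"
  obtain K1 where K1: "\<And>x. norm (S x) \<le> K1 * norm x" using S unfolding bounded_op_def by blast
  obtain K2 where K2: "\<And>x. norm (T x) \<le> K2 * norm x" using T unfolding bounded_op_def by blast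
  have "norm (S x + T x) \<le> (K1 + K2) * norm x" for x
    using norm_triangle_ineq[of "S x" "T x"] K1[of x] K2[of x] by (simp add: distrib_right)
  thus ?thesis using S T unfolding bounded_op_def by (auto simp: scaleC_add_right)
qed

lemma bounded_op_scaleC: "bounded_op T \<Longrightarrow> bounded_op (\<lambda>h. scaleC c (T h))"
proof -
  assume T: "bounded_op T"
  obtain K where K: "\<And>x. norm (T x) \<le> K * norm x" using T unfolding bounded_op_def by blast
  have "norm (scaleC c (T x)) \<le> (cmod c * K) * norm x" for x
    using K[of x] by (simp add: norm_scaleC mult.assoc mult_left_mono)
  moreover have "scaleC c (T (scaleC d x)) = scaleC d (scaleC c (T x))" for d x
    using T by (simp add: bounded_op_apply_scaleC scaleC_scaleC mult.commute)
  ultimately show ?thesis using T unfolding bounded_op_def by (auto simp: scaleC_add_right)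
qed

lemma bounded_op_zero: "bounded_op (\<lambda>h. 0)"
  unfolding bounded_op_def by (auto intro: exI[of _ 0])

lemma bounded_op_sum:
  "finite A \<Longrightarrow> (\<And>i. i \<in> A \<Longrightarrow> bounded_op (f i)) \<Longrightarrow> bounded_op (\<lambda>h. \<Sum>i\<in>A. f i h)"
  by (induct A rule: finite_induct) (auto simp: bounded_op_zero bounded_op_add)

lemma op_positive_selfadjoint:
  assumes T: "op_positive T"
  shows "op_selfadjoint T"
proof -
  have b: "bounded_op T" using T by (simp add: op_positive_def)
  have real: "Im (cinner v (T v)) = 0" for v using T by (simp add: op_positive_def)
  have "cinner (T x) y = cinner x (T y)" for x y
  proof -
    let ?u = "cinner x (T y)" and ?v = "cinner y (T x)"
    have "cinner (x + y) (T (x + y)) = cinner x (T x) + cinner y (T y) + ?u + ?v"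
      by (simp add: bounded_op_apply_add[OF b] cinner_add_left cinner_add_right)
    hence "Im (?u + ?v) = 0" using real[of "x + y"] real[of x] real[of y] by simp
    moreover have "cinner (x + scaleC \<i> y) (T (x + scaleC \<i> y)) =
        cinner x (T x) + cinner y (T y) + \<i> * ?u - \<i> * ?v"
      by (simp add: bounded_op_apply_add[OF b] bounded_op_apply_scaleC[OF b] cinner_add_left
          cinner_add_right cinner_scaleC_left cinner_scaleC_right; simp add: algebra_simps)
    hence "Im (\<i> * ?u - \<i> * ?v) = 0" using real[of "x + scaleC \<i> y"] real[of x] real[of y] by simp
    ultimately have "?u = cnj ?v" by (simp add: complex_eq_iff)
    thus ?thesis by (metis cinner_commute)
  qed
  thus ?thesis using b by (simp add: op_selfadjoint_def)
qed

text \<open>For \<open>z = T y\<close> the quadratic form \<open>s \<mapsto> \<langle>y - s z, T (y - s z)\<rangle>\<close> equals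
  \<open>- 2 s \<parallel>z\<parallel>\<^sup>2 + s\<^sup>2 \<langle>z, T z\<rangle>\<close>, which is negative for small \<open>s > 0\<close> unless \<open>z = 0\<close>.\<close>
lemma op_positive_kernel:
  assumes T: "op_positive T" and y: "cinner y (T y) = 0"
  shows "T y = 0"
proof (rule ccontr)
  assume nz: "T y \<noteq> 0"
  have b: "bounded_op T" using T by (simp add: op_positive_def)
  let ?z = "T y"
  let ?N = "(norm ?z)\<^sup>2" and ?Q = "Re (cinner ?z (T ?z))"
  have N: "?N > 0" using nz by simp
  have Q: "?Q \<ge> 0" using T by (simp add: op_positive_def)
  have form: "Re (cinner (y + scaleC (complex_of_real t) ?z) (T (y + scaleC (complex_of_real t) ?z)))
        = 2 * t * ?N + t\<^sup>2 * ?Q" for t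
  proof -
    have "cinner y (T ?z) = cinner ?z ?z"
      using op_positive_selfadjoint[OF T] by (simp add: op_selfadjoint_def)
    thus ?thesis
      by (simp add: bounded_op_apply_add[OF b] bounded_op_apply_scaleC[OF b] cinner_add_left
          cinner_add_right cinner_scaleC_left cinner_scaleC_right y cinner_self power2_eq_square;
          simp add: algebra_simps)
  qed
  define s where "s = ?N / (?Q + 1)"
  have s: "s > 0" using N Q unfolding s_def by simp
  have "0 \<le> Re (cinner w (T w))" for w using T by (simp add: op_positive_def)
  hence "0 \<le> 2 * (- s) * ?N + (- s)\<^sup>2 * ?Q" by (simp only: form[symmetric])
  hence "s * ?Q \<ge> 2 * ?N" using s by (simp add: power2_eq_square algebra_simps)
  moreover have "s * ?Q \<le> ?N" using N Q unfolding s_def by (simp add: field_simps)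
  ultimately show False using N by simp
qed

lemma onorm_tendsto_0_imp_tendsto:
  fixes F :: "nat \<Rightarrow> 'a::real_normed_vector \<Rightarrow> 'b::real_normed_vector"
  assumes bl: "\<And>k. bounded_linear (\<lambda>x. F k x - G x)"
    and lim: "(\<lambda>k. onorm (\<lambda>x. F k x - G x)) \<longlonglongrightarrow> 0"
  shows "(\<lambda>k. F k h) \<longlonglongrightarrow> G h"
proof -
  have "(\<lambda>k. onorm (\<lambda>x. F k x - G x) * norm h) \<longlonglongrightarrow> 0 * norm h"
    by (intro tendsto_mult lim tendsto_const)
  moreover have "\<forall>k. norm (F k h - G h) \<le> onorm (\<lambda>x. F k x - G x) * norm h"
    using onorm[OF bl] by simp
  ultimately have "(\<lambda>k. F k h - G h) \<longlonglongrightarrow> 0"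
    using Lim_null_comparison[OF always_eventually] by simp
  thus ?thesis by (rule LIM_zero_cancel)
qed

lemma LIMSEQ_eq_limits:
  assumes "f \<longlonglongrightarrow> p" and "g \<longlonglongrightarrow> (q::'a::t2_space)" and "\<And>k. f k = g k"
  shows "p = q"
proof -
  have "f = g" using assms(3) by (rule ext)
  thus ?thesis using assms(1,2) LIMSEQ_unique by blast
qed

lemma convergent_coeff_if_scaleC_convergent:
  fixes v :: "'a::complex_normed_vector"
  assumes v: "v \<noteq> 0" and lim: "(\<lambda>k. scaleC (c k) v) \<longlonglongrightarrow> w"
  shows "convergent c"
proof -
  have C: "Cauchy (\<lambda>k. scaleC (c k) v)" by (rule LIMSEQ_imp_Cauchy[OF lim])
  have nv: "norm v > 0" using v by simp
  have "Cauchy c"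
  proof (rule metric_CauchyI)
    fix e :: real assume e: "e > 0"
    obtain M where M: "\<forall>m\<ge>M. \<forall>k\<ge>M. dist (scaleC (c m) v) (scaleC (c k) v) < e * norm v"
      using metric_CauchyD[OF C, of "e * norm v"] e nv by auto
    have "dist (c m) (c k) < e" if "m \<ge> M" "k \<ge> M" for m k
    proof -
      have "dist (scaleC (c m) v) (scaleC (c k) v) = dist (c m) (c k) * norm v"
        by (simp add: dist_norm scaleC_diff_left[symmetric] norm_scaleC)
      hence "dist (c m) (c k) * norm v < e * norm v" using M that by metis
      thus ?thesis using nv by simp
    qed
    thus "\<exists>M. \<forall>m\<ge>M. \<forall>n\<ge>M. dist (c m) (c n) < e" by blast
  qed
  thus ?thesis by (simp add: Cauchy_convergent_iff)
qed

text \<open>Induction on \<open>N\<close>: the \<open>N\<close>-th coordinate is eliminated using an element of \<open>L\<close>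
  on which it does not vanish.\<close>
lemma finite_support_subspace_closed:
  fixes L :: "(nat \<Rightarrow> complex) set"
  assumes "(\<lambda>i. 0) \<in> L"
    and "\<And>u v. u \<in> L \<Longrightarrow> v \<in> L \<Longrightarrow> (\<lambda>i. u i + v i) \<in> L"
    and "\<And>c u. u \<in> L \<Longrightarrow> (\<lambda>i. c * u i) \<in> L"
    and "\<And>u i. u \<in> L \<Longrightarrow> N \<le> i \<Longrightarrow> u i = 0"
    and "\<And>k. f k \<in> L"
    and "\<And>i. (\<lambda>k. f k i) \<longlonglongrightarrow> g i"
  shows "g \<in> L"
  using assms
proof (induct N arbitrary: L f g)
  case 0
  hence "f k i = 0" for k i by blast
  hence "(\<lambda>k. f k i) \<longlonglongrightarrow> 0" for i by simp
  hence "g = (\<lambda>i. 0)" using "0.prems"(6) LIMSEQ_unique by blast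
  thus ?case using "0.prems"(1) by simp
next
  case (Suc N)
  note P = Suc.prems
  show ?case
  proof (cases "\<exists>u\<in>L. u N \<noteq> 0")
    case False
    hence "\<And>u i. u \<in> L \<Longrightarrow> N \<le> i \<Longrightarrow> u i = 0"
      using P(4) by (metis le_antisym not_less_eq_eq)
    with P show ?thesis by (intro Suc.hyps[of L f g])
  next
    case True
    then obtain u where u: "u \<in> L" "u N \<noteq> 0" by blast
    define e where "e = (\<lambda>i. (1 / u N) * u i)"
    have e: "e \<in> L" "e N = 1" unfolding e_def using P(3)[OF u(1), of "1 / u N"] u(2) by simp_all
    define L' where "L' = {v \<in> L. v N = 0}"
    define g' where "g' = (\<lambda>i. g i + (- g N) * e i)"
    have "g' \<in> L'"
    proof (rule Suc.hyps[where f = "\<lambda>k i. f k i + (- f k N) * e i"])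
      show "(\<lambda>i. f k i + (- f k N) * e i) \<in> L'" for k
        using P(2)[OF P(5)[of k] P(3)[OF e(1), of "- f k N"]] e(2) by (simp add: L'_def)
      show "v i = 0" if "v \<in> L'" "N \<le> i" for v i
        using that P(4)[of v i] by (cases "i = N") (auto simp: L'_def)
      show "(\<lambda>k. f k i + (- f k N) * e i) \<longlonglongrightarrow> g' i" for i
        unfolding g'_def by (intro tendsto_intros P(6))
    qed (use P in \<open>auto simp: L'_def\<close>)
    hence "(\<lambda>i. g' i + g N * e i) \<in> L" using P(2) P(3)[OF e(1)] by (simp add: L'_def)
    moreover have "(\<lambda>i. g' i + g N * e i) = g" by (auto simp: g'_def)
    ultimately show ?thesis by simp
  qed
qed

lemma center_vN_generatedI:
  assumes "T \<in> S" and "T \<in> commutant S"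
  shows "T \<in> center (vN_generated S)"
proof -
  have T: "bounded_op T" "\<And>X. X \<in> S \<Longrightarrow> T \<circ> X = X \<circ> T"
    using assms(2) unfolding commutant_def by auto
  have "T \<in> commutant (commutant S)"
    using assms(1) T(1) unfolding commutant_def by (simp add: fun_eq_iff)
  moreover have "T \<in> commutant (commutant (commutant S))"
    using assms(2) T(1) unfolding commutant_def by (simp add: fun_eq_iff)
  ultimately show ?thesis unfolding center_def vN_generated_def by blast
qed

section \<open>Sums of states with positive operator coefficients\<close>

locale state_sum_map =
  fixes \<phi> :: "'a::cstar_algebra \<Rightarrow> 'h::chilbert_space \<Rightarrow> 'h"
    and n :: nat and \<omega> :: "nat \<Rightarrow> 'a \<Rightarrow> complex" and b :: "nat \<Rightarrow> 'h \<Rightarrow> 'h"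
  assumes unital: "\<phi> 1 = id"
    and states: "\<And>i. i < n \<Longrightarrow> is_state (\<omega> i)"
    and b_positive: "\<And>i. i < n \<Longrightarrow> op_positive (b i)"
    and form: "\<And>x. \<phi> x = (\<lambda>h. \<Sum>i<n. scaleC (\<omega> i x) (b i h))"
begin

lemma phi_apply: "\<phi> x h = (\<Sum>i<n. scaleC (\<omega> i x) (b i h))"
  by (simp add: form)

lemma b_bounded: "i < n \<Longrightarrow> bounded_op (b i)"
  using b_positive by (simp add: op_positive_def)

lemma b_selfadjoint: "i < n \<Longrightarrow> cinner (b i x) y = cinner x (b i y)"
  using op_positive_selfadjoint[OF b_positive] by (simp add: op_selfadjoint_def)

lemma b_nonneg: "i < n \<Longrightarrow> Im (cinner x (b i x)) = 0 \<and> Re (cinner x (b i x)) \<ge> 0"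
  using b_positive by (simp add: op_positive_def)

lemma sum_b: "(\<Sum>i<n. b i h) = h"
  using phi_apply[of 1 h] by (simp add: unital state_one[OF states] scaleC_one)

lemma phi_bounded: "bounded_op (\<phi> x)"
  unfolding form by (intro bounded_op_sum bounded_op_scaleC b_bounded) auto

lemma phi_add: "\<phi> (x + y) = (\<lambda>h. \<phi> x h + \<phi> y h)"
  by (simp add: fun_eq_iff phi_apply state_add[OF states] scaleC_add_left sum.distrib)

lemma phi_scaleC: "\<phi> (scaleC c x) = (\<lambda>h. scaleC c (\<phi> x h))"
  by (simp add: fun_eq_iff phi_apply state_scaleC[OF states] scaleC_sum_right scaleC_scaleC)

lemma phi_zero: "\<phi> 0 = (\<lambda>h. 0)"
  by (simp add: fun_eq_iff phi_apply state_zero[OF states])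

lemma phi_adjoint: "cinner (\<phi> x h) k = cinner h (\<phi> (cstar x) k)"
  by (simp add: phi_apply cinner_sum_left cinner_sum_right cinner_scaleC_left cinner_scaleC_right
      state_cstar[OF states] b_selfadjoint)

lemma phi_selfadjoint: "cstar a = a \<Longrightarrow> op_selfadjoint (\<phi> a)"
  using phi_adjoint[of a] phi_bounded by (simp add: op_selfadjoint_def)

lemma phi_tendsto:
  assumes "z \<longlonglongrightarrow> l"
  shows "(\<lambda>k. \<phi> (z k) h) \<longlonglongrightarrow> \<phi> l h"
  unfolding phi_apply
  by (intro tendsto_sum tendsto_scaleC tendsto_const
      bounded_linear.tendsto[OF state_bounded_linear[OF states] assms]) simp

definition active :: "nat \<Rightarrow> bool" where
  "active i \<longleftrightarrow> i < n \<and> b i \<noteq> (\<lambda>h. 0)"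

lemma sum_active_cong:
  assumes "\<And>i. active i \<Longrightarrow> \<alpha> i = \<beta> i"
  shows "(\<Sum>i<n. scaleC (\<alpha> i) (b i h)) = (\<Sum>i<n. scaleC (\<beta> i) (b i h))"
proof (intro sum.cong refl)
  fix i assume "i \<in> {..<n}"
  thus "scaleC (\<alpha> i) (b i h) = scaleC (\<beta> i) (b i h)"
    using assms[of i] by (cases "b i = (\<lambda>h. 0)") (auto simp: active_def)
qed

lemma active_witness:
  assumes "active i"
  obtains h where "Re (cinner h (b i h)) > 0"
proof -
  obtain h where h: "b i h \<noteq> 0" using assms by (auto simp: active_def)
  have i: "i < n" using assms by (simp add: active_def)
  have "cinner h (b i h) \<noteq> 0" using op_positive_kernel[OF b_positive[OF i]] h by blast
  hence "Re (cinner h (b i h)) \<noteq> 0" using b_nonneg[OF i, of h] by (simp add: complex_eq_iff)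
  hence "Re (cinner h (b i h)) > 0" using b_nonneg[OF i, of h] by simp
  thus ?thesis by (rule that)
qed

text \<open>The coherent elements form a C*-subalgebra whose self-adjoint part is the definite set of
  \<open>\<phi>\<close> (\<open>definite_set_eq\<close> below). Summands with \<open>b\<^sub>i = 0\<close> impose no condition.\<close>
definition coherent :: "'a \<Rightarrow> bool" where
  "coherent z \<longleftrightarrow> (\<forall>i. active i \<longrightarrow> z \<in> mult_domain (\<omega> i) \<and>
     (\<forall>h. b i (\<phi> z h) = scaleC (\<omega> i z) (b i h) \<and> \<phi> z (b i h) = scaleC (\<omega> i z) (b i h)))"

lemma coherent_mult_domain: "coherent z \<Longrightarrow> active i \<Longrightarrow> z \<in> mult_domain (\<omega> i)"
  by (simp add: coherent_def)

lemma coherent_b_phi: "coherent z \<Longrightarrow> i < n \<Longrightarrow> b i (\<phi> z h) = scaleC (\<omega> i z) (b i h)"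
  by (cases "b i = (\<lambda>h. 0)") (simp_all add: coherent_def active_def)

lemma coherent_phi_b: "coherent z \<Longrightarrow> i < n \<Longrightarrow> \<phi> z (b i h) = scaleC (\<omega> i z) (b i h)"
  by (cases "b i = (\<lambda>h. 0)")
    (simp_all add: coherent_def active_def bounded_op_apply_zero[OF phi_bounded])

lemma coherent_comp_phi: "coherent z \<Longrightarrow> \<phi> z (\<phi> x h) = (\<Sum>i<n. scaleC (\<omega> i z * \<omega> i x) (b i h))"
  by (simp add: phi_apply[of x] bounded_op_apply_sum[OF phi_bounded]
      bounded_op_apply_scaleC[OF phi_bounded] coherent_phi_b scaleC_scaleC mult.commute)

lemma phi_comp_coherent: "coherent z \<Longrightarrow> \<phi> x (\<phi> z h) = (\<Sum>i<n. scaleC (\<omega> i z * \<omega> i x) (b i h))"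
  by (simp add: phi_apply[of x] coherent_b_phi scaleC_scaleC mult.commute)

lemma coherent_phi_commute: "coherent z \<Longrightarrow> \<phi> z \<circ> \<phi> x = \<phi> x \<circ> \<phi> z"
  by (simp add: fun_eq_iff coherent_comp_phi phi_comp_coherent)

lemma phi_mult_left:
  assumes z: "coherent z"
  shows "\<phi> (z * x) = \<phi> z \<circ> \<phi> x"
proof
  fix h
  have "\<phi> (z * x) h = (\<Sum>i<n. scaleC (\<omega> i (z * x)) (b i h))" by (rule phi_apply)
  also have "\<dots> = (\<Sum>i<n. scaleC (\<omega> i z * \<omega> i x) (b i h))"
    by (rule sum_active_cong) (rule mult_domainD(2)[OF coherent_mult_domain[OF z]])
  finally show "\<phi> (z * x) h = (\<phi> z \<circ> \<phi> x) h" by (simp add: coherent_comp_phi[OF z])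
qed

lemma phi_mult_right:
  assumes z: "coherent z"
  shows "\<phi> (x * z) = \<phi> x \<circ> \<phi> z"
proof
  fix h
  have "\<phi> (x * z) h = (\<Sum>i<n. scaleC (\<omega> i (x * z)) (b i h))" by (rule phi_apply)
  also have "\<dots> = (\<Sum>i<n. scaleC (\<omega> i z * \<omega> i x) (b i h))"
    by (rule sum_active_cong) (simp add: mult_domainD(1)[OF coherent_mult_domain[OF z]] mult.commute)
  finally show "\<phi> (x * z) h = (\<phi> x \<circ> \<phi> z) h" by (simp add: phi_comp_coherent[OF z])
qed

lemma coherent_one: "coherent 1"
  unfolding coherent_def active_def
  by (simp add: mult_domain_one state_one[OF states] unital scaleC_one)

lemma coherent_add: "coherent z \<Longrightarrow> coherent w \<Longrightarrow> coherent (z + w)"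
  unfolding coherent_def active_def
  by (simp add: mult_domain_add states phi_add bounded_op_apply_add[OF b_bounded]
      state_add[OF states] scaleC_add_left)

lemma coherent_scaleC: "coherent z \<Longrightarrow> coherent (scaleC c z)"
  unfolding coherent_def active_def
  by (simp add: mult_domain_scaleC states phi_scaleC bounded_op_apply_scaleC[OF b_bounded]
      state_scaleC[OF states] scaleC_scaleC)

lemma coherent_zero: "coherent 0"
  using coherent_scaleC[OF coherent_one, of 0] by simp

lemma coherent_diff: "coherent z \<Longrightarrow> coherent w \<Longrightarrow> coherent (z - w)"
  using coherent_add[of z "scaleC (-1) w"] coherent_scaleC[of w "-1"]
  by (simp add: scaleC_minus_left scaleC_one)

lemma coherent_mult:
  assumes z: "coherent z" and w: "coherent w"
  shows "coherent (z * w)"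
  unfolding coherent_def
proof (intro allI impI conjI)
  fix i h assume i: "active i"
  hence i': "i < n" by (simp add: active_def)
  have zw: "\<omega> i (z * w) = \<omega> i z * \<omega> i w"
    using mult_domainD(2)[OF coherent_mult_domain[OF z i]] .
  show "z * w \<in> mult_domain (\<omega> i)"
    using coherent_mult_domain[OF z i] coherent_mult_domain[OF w i] by (rule mult_domain_mult)
  show "b i (\<phi> (z * w) h) = scaleC (\<omega> i (z * w)) (b i h)"
    by (simp add: phi_mult_left[OF z] zw coherent_b_phi[OF _ i'] z w
        bounded_op_apply_scaleC[OF b_bounded[OF i']] scaleC_scaleC)
  show "\<phi> (z * w) (b i h) = scaleC (\<omega> i (z * w)) (b i h)"
    by (simp add: phi_mult_left[OF z] zw coherent_phi_b[OF _ i'] z w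
        bounded_op_apply_scaleC[OF phi_bounded] scaleC_scaleC mult.commute)
qed

lemma coherent_cstar:
  assumes z: "coherent z"
  shows "coherent (cstar z)"
  unfolding coherent_def
proof (intro allI impI conjI)
  fix i h assume i: "active i"
  hence i': "i < n" by (simp add: active_def)
  have c: "cnj (\<omega> i (cstar z)) = \<omega> i z" by (simp add: state_cstar[OF states[OF i']])
  show "cstar z \<in> mult_domain (\<omega> i)"
    by (intro mult_domain_cstar states[OF i'] coherent_mult_domain[OF z i])
  show "b i (\<phi> (cstar z) h) = scaleC (\<omega> i (cstar z)) (b i h)"
  proof (rule cinner_ext_left)
    fix y
    have "cinner (b i (\<phi> (cstar z) h)) y = cinner h (\<phi> z (b i y))"
      by (simp add: b_selfadjoint[OF i'] phi_adjoint cstar_involutive)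
    thus "cinner (b i (\<phi> (cstar z) h)) y = cinner (scaleC (\<omega> i (cstar z)) (b i h)) y"
      by (simp add: coherent_phi_b[OF z i'] cinner_scaleC_left cinner_scaleC_right c
          b_selfadjoint[OF i'])
  qed
  show "\<phi> (cstar z) (b i h) = scaleC (\<omega> i (cstar z)) (b i h)"
  proof (rule cinner_ext_left)
    fix y
    have "cinner (\<phi> (cstar z) (b i h)) y = cinner h (b i (\<phi> z y))"
      by (simp add: b_selfadjoint[OF i'] phi_adjoint cstar_involutive)
    thus "cinner (\<phi> (cstar z) (b i h)) y = cinner (scaleC (\<omega> i (cstar z)) (b i h)) y"
      by (simp add: coherent_b_phi[OF z i'] cinner_scaleC_left cinner_scaleC_right c
          b_selfadjoint[OF i'])
  qed
qed

lemma closed_coherent: "closed (Collect coherent)"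
  unfolding closed_sequential_limits
proof (intro allI impI, elim conjE)
  fix z l assume z: "\<forall>k. z k \<in> Collect coherent" and lim: "z \<longlonglongrightarrow> l"
  show "l \<in> Collect coherent"
    unfolding mem_Collect_eq coherent_def
  proof (intro allI impI conjI)
    fix i h assume i: "active i"
    hence i': "i < n" by (simp add: active_def)
    have \<omega>: "(\<lambda>k. \<omega> i (f k)) \<longlonglongrightarrow> \<omega> i p" if "f \<longlonglongrightarrow> p" for f p
      by (rule bounded_linear.tendsto[OF state_bounded_linear[OF states[OF i']] that])
    have coh: "coherent (z k)" for k using z by simp
    show "l \<in> mult_domain (\<omega> i)"
      unfolding mult_domain_def
    proof (intro CollectI allI conjI)
      fix x
      show "\<omega> i (x * l) = \<omega> i x * \<omega> i l"
        by (rule LIMSEQ_eq_limits[OF \<omega>[OF tendsto_mult[OF tendsto_const lim]] tendsto_mult[OF tendsto_const \<omega>[OF lim]]])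
          (rule mult_domainD[OF coherent_mult_domain[OF coh i]])
      show "\<omega> i (l * x) = \<omega> i l * \<omega> i x"
        by (rule LIMSEQ_eq_limits[OF \<omega>[OF tendsto_mult[OF lim tendsto_const]] tendsto_mult[OF \<omega>[OF lim] tendsto_const]])
          (rule mult_domainD[OF coherent_mult_domain[OF coh i]])
    qed
    have b_cont: "(\<lambda>k. b i (f k)) \<longlonglongrightarrow> b i p" if "f \<longlonglongrightarrow> p" for f p
      by (rule bounded_linear.tendsto[OF bounded_op_bounded_linear[OF b_bounded[OF i']] that])
    show "b i (\<phi> l h) = scaleC (\<omega> i l) (b i h)"
      by (rule LIMSEQ_eq_limits[OF b_cont[OF phi_tendsto[OF lim]] tendsto_scaleC[OF \<omega>[OF lim] tendsto_const]])
        (rule coherent_b_phi[OF coh i'])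
    show "\<phi> l (b i h) = scaleC (\<omega> i l) (b i h)"
      by (rule LIMSEQ_eq_limits[OF phi_tendsto[OF lim] tendsto_scaleC[OF \<omega>[OF lim] tendsto_const]])
        (rule coherent_phi_b[OF coh i'])
  qed
qed

lemma cstar_subalgebra_coherent: "cstar_subalgebra (Collect coherent)"
  unfolding cstar_subalgebra_def
  using coherent_scaleC[OF coherent_one, of 0]
  by (simp add: coherent_add coherent_mult coherent_scaleC coherent_cstar closed_coherent)

text \<open>The sum below equals \<open>\<langle>h, \<phi>(a\<^sup>2) h\<rangle> - \<parallel>\<phi>(a) h\<parallel>\<^sup>2\<close>, and each of its summands is
  nonnegative; so all of them vanish when \<open>a\<close> is definite.\<close>
lemma definite_defect_sum:
  fixes h :: 'h
  assumes a: "cstar a = a" and D: "\<phi> (a * a) = \<phi> a \<circ> \<phi> a"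
  defines "y \<equiv> \<lambda>i. scaleC (\<omega> i a) h - \<phi> a h"
  shows "(\<Sum>i<n. (\<omega> i (a * a) - (\<omega> i a)\<^sup>2) * cinner h (b i h) + cinner (y i) (b i (y i))) = 0"
proof -
  let ?T = "\<phi> a"
  have summand: "(\<omega> i (a * a) - (\<omega> i a)\<^sup>2) * cinner h (b i h) + cinner (y i) (b i (y i)) =
      \<omega> i (a * a) * cinner h (b i h) - \<omega> i a * cinner h (b i (?T h))
        - \<omega> i a * cinner (?T h) (b i h) + cinner (?T h) (b i (?T h))" if i: "i < n" for i
    unfolding y_def using state_selfadjoint_cnj[OF states[OF i] a]
    by (simp add: bounded_op_apply_diff[OF b_bounded[OF i]] bounded_op_apply_scaleC[OF b_bounded[OF i]]
        cinner_diff_left cinner_diff_right cinner_scaleC_left cinner_scaleC_right power2_eq_square;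
        simp add: algebra_simps)
  have "(\<Sum>i<n. \<omega> i (a * a) * cinner h (b i h)) = cinner h (\<phi> (a * a) h)"
    by (simp add: phi_apply[of "a * a"] cinner_sum_right cinner_scaleC_right)
  also have "\<dots> = cinner h (?T (?T h))" using D by simp
  finally have s1: "(\<Sum>i<n. \<omega> i (a * a) * cinner h (b i h)) = cinner h (?T (?T h))" .
  have s2: "(\<Sum>i<n. \<omega> i a * cinner h (b i (?T h))) = cinner h (?T (?T h))"
    by (simp add: phi_apply[of a "?T h"] cinner_sum_right cinner_scaleC_right)
  have s3: "(\<Sum>i<n. \<omega> i a * cinner (?T h) (b i h)) = cinner (?T h) (?T h)"
    by (simp add: phi_apply[of a h] cinner_sum_right cinner_scaleC_right)
  have s4: "(\<Sum>i<n. cinner (?T h) (b i (?T h))) = cinner (?T h) (?T h)"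
    by (simp add: cinner_sum_right[symmetric] sum_b)
  have "(\<Sum>i<n. (\<omega> i (a * a) - (\<omega> i a)\<^sup>2) * cinner h (b i h) + cinner (y i) (b i (y i))) =
      (\<Sum>i<n. \<omega> i (a * a) * cinner h (b i h) - \<omega> i a * cinner h (b i (?T h))
        - \<omega> i a * cinner (?T h) (b i h) + cinner (?T h) (b i (?T h)))"
    by (intro sum.cong refl summand) simp
  also have "\<dots> = 0" using s1 s2 s3 s4 by (simp add: sum.distrib sum_subtractf)
  finally show ?thesis .
qed

lemma definite_terms_vanish:
  assumes a: "cstar a = a" and D: "\<phi> (a * a) = \<phi> a \<circ> \<phi> a" and i: "i < n"
  shows "Re ((\<omega> i (a * a) - (\<omega> i a)\<^sup>2) * cinner h (b i h)) = 0"
    and "b i (\<phi> a h) = scaleC (\<omega> i a) (b i h)"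
proof -
  define y where "y = (\<lambda>i. scaleC (\<omega> i a) h - \<phi> a h)"
  define t where "t = (\<lambda>i. (\<omega> i (a * a) - (\<omega> i a)\<^sup>2) * cinner h (b i h))"
  have nonneg: "Im (t j) = 0 \<and> Re (t j) \<ge> 0 \<and> Im (cinner (y j) (b j (y j))) = 0
      \<and> Re (cinner (y j) (b j (y j))) \<ge> 0" if "j < n" for j
    using state_variance_nonneg[OF states[OF that] a] b_nonneg[OF that, of h]
      b_nonneg[OF that, of "y j"] unfolding t_def by simp
  have "(\<Sum>j<n. Re (t j) + Re (cinner (y j) (b j (y j)))) = 0"
    using arg_cong[OF definite_defect_sum[OF a D, of h], of Re] by (simp add: Re_sum t_def y_def)
  hence "Re (t i) + Re (cinner (y i) (b i (y i))) = 0"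
    using nonneg i by (subst (asm) sum_nonneg_eq_0_iff) auto
  hence "Re (t i) = 0" and "cinner (y i) (b i (y i)) = 0"
    using nonneg[OF i] by (simp_all add: complex_eq_iff)
  thus "Re ((\<omega> i (a * a) - (\<omega> i a)\<^sup>2) * cinner h (b i h)) = 0" unfolding t_def by simp
  have "b i (y i) = 0" by (rule op_positive_kernel[OF b_positive[OF i]]) fact
  thus "b i (\<phi> a h) = scaleC (\<omega> i a) (b i h)"
    by (simp add: y_def bounded_op_apply_diff[OF b_bounded[OF i]] bounded_op_apply_scaleC[OF b_bounded[OF i]])
qed

lemma coherent_if_definite:
  assumes a: "cstar a = a" and D: "\<phi> (a * a) = \<phi> a \<circ> \<phi> a"
  shows "coherent a"
  unfolding coherent_def
proof (intro allI impI conjI)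
  fix i h assume act: "active i"
  hence i: "i < n" by (simp add: active_def)
  obtain k where k: "Re (cinner k (b i k)) > 0" using active_witness[OF act] .
  have "Re (\<omega> i (a * a) - (\<omega> i a)\<^sup>2) * Re (cinner k (b i k)) = 0"
    using definite_terms_vanish(1)[OF a D i, of k] state_variance_nonneg[OF states[OF i] a]
      b_nonneg[OF i, of k] by simp
  hence "\<omega> i (a * a) = (\<omega> i a)\<^sup>2"
    using k state_variance_nonneg[OF states[OF i] a] by (simp add: complex_eq_iff)
  thus "a \<in> mult_domain (\<omega> i)" by (rule state_mult_domainI[OF states[OF i] a])
  show "b i (\<phi> a h) = scaleC (\<omega> i a) (b i h)" by (rule definite_terms_vanish(2)[OF a D i])
  show "\<phi> a (b i h) = scaleC (\<omega> i a) (b i h)"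
  proof (rule cinner_ext_left)
    fix y
    show "cinner (\<phi> a (b i h)) y = cinner (scaleC (\<omega> i a) (b i h)) y"
      using definite_terms_vanish(2)[OF a D i, of y]
      by (simp add: phi_adjoint a b_selfadjoint[OF i] cinner_scaleC_left cinner_scaleC_right
          state_selfadjoint_cnj[OF states[OF i] a])
  qed
qed

lemma definite_set_eq: "definite_set \<phi> = {a. coherent a \<and> cstar a = a}"
  unfolding definite_set_def using coherent_if_definite phi_mult_left by blast

lemma coherent_commute_if_faithful:
  assumes f: "faithful_map \<phi>" and z: "coherent z" and w: "coherent w"
  shows "z * w = w * z"
proof -
  let ?x = "z * w - w * z"
  have x: "coherent ?x"
    using coherent_add[OF coherent_mult[OF z w] coherent_scaleC[OF coherent_mult[OF w z], of "-1"]]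
    by (simp add: scaleC_minus_left scaleC_one)
  have "\<phi> (cstar ?x * ?x) h = (\<Sum>i<n. scaleC 0 (b i h))" for h
    unfolding phi_apply
  proof (rule sum_active_cong)
    fix i assume i: "active i"
    have "\<omega> i ?x = 0"
      using mult_domainD(2)[OF coherent_mult_domain[OF z i], of w]
        mult_domainD(2)[OF coherent_mult_domain[OF w i], of z]
      by (simp add: state_diff[OF states] i[unfolded active_def])
    thus "\<omega> i (cstar ?x * ?x) = 0" using mult_domainD(1)[OF coherent_mult_domain[OF x i]] by simp
  qed
  hence "\<phi> (cstar ?x * ?x) = (\<lambda>h. 0)" by auto
  hence "?x = 0" using f unfolding faithful_map_def by blast
  thus ?thesis by simp
qed

definition coherent_image :: "('h \<Rightarrow> 'h) set" where
  "coherent_image = \<phi> ` Collect coherent"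

lemma coherent_coeff_limit:
  assumes z: "\<And>k. coherent (z k)" and lim: "\<And>h. (\<lambda>k. \<phi> (z k) h) \<longlonglongrightarrow> T h"
    and i: "active i"
  obtains m where "(\<lambda>k. \<omega> i (z k)) \<longlonglongrightarrow> m" and "\<And>h. b i (T h) = scaleC m (b i h)"
proof -
  have i': "i < n" using i by (simp add: active_def)
  have conv: "(\<lambda>k. scaleC (\<omega> i (z k)) (b i h)) \<longlonglongrightarrow> b i (T h)" for h
    using bounded_linear.tendsto[OF bounded_op_bounded_linear[OF b_bounded[OF i']] lim]
    by (simp add: coherent_b_phi[OF z i'])
  obtain h0 where "b i h0 \<noteq> 0" using i by (auto simp: active_def)
  then obtain m where m: "(\<lambda>k. \<omega> i (z k)) \<longlonglongrightarrow> m"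
    using convergent_coeff_if_scaleC_convergent[OF _ conv] by (auto simp: convergent_def)
  have "b i (T h) = scaleC m (b i h)" for h
    using LIMSEQ_unique[OF conv tendsto_scaleC[OF m tendsto_const]] .
  with m show ?thesis by (rule that)
qed

definition active_coeffs :: "'a \<Rightarrow> nat \<Rightarrow> complex" where
  "active_coeffs u = (\<lambda>i. if active i then \<omega> i u else 0)"

lemma active_coeffs_limit:
  assumes z: "\<And>k. coherent (z k)" and g: "\<And>i. (\<lambda>k. active_coeffs (z k) i) \<longlonglongrightarrow> g i"
  obtains u where "coherent u" and "g = active_coeffs u"
proof -
  have add: "(\<lambda>i. active_coeffs p i + active_coeffs q i) = active_coeffs (p + q)"
    and scale: "(\<lambda>i. c * active_coeffs p i) = active_coeffs (scaleC c p)" for p q c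
    by (auto simp: fun_eq_iff active_coeffs_def active_def state_add[OF states] state_scaleC[OF states])
  let ?L = "active_coeffs ` Collect coherent"
  have "g \<in> ?L"
  proof (rule finite_support_subspace_closed[where N = n and f = "\<lambda>k. active_coeffs (z k)"])
    have "active_coeffs 0 = (\<lambda>i. 0)"
      by (auto simp: fun_eq_iff active_coeffs_def active_def state_zero[OF states])
    thus "(\<lambda>i. 0) \<in> ?L" using coherent_zero by (intro image_eqI[of _ active_coeffs 0]) simp_all
    show "(\<lambda>i. u i + v i) \<in> ?L" if uv: "u \<in> ?L" "v \<in> ?L" for u v
    proof -
      obtain p q where "coherent p" "coherent q" "u = active_coeffs p" "v = active_coeffs q"
        using uv by blast
      thus ?thesis using add coherent_add by (intro image_eqI[of _ active_coeffs "p + q"]) simp_all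
    qed
    show "(\<lambda>i. c * u i) \<in> ?L" if u: "u \<in> ?L" for c u
    proof -
      obtain p where "coherent p" "u = active_coeffs p" using u by blast
      thus ?thesis using scale coherent_scaleC by (intro image_eqI[of _ active_coeffs "scaleC c p"]) simp_all
    qed
    show "u i = 0" if "u \<in> ?L" "n \<le> i" for u i
      using that by (auto simp: active_coeffs_def active_def)
    show "active_coeffs (z k) \<in> ?L" for k using z by blast
  qed (rule g)
  thus ?thesis using that by blast
qed

lemma coherent_image_closed:
  assumes T: "\<And>k. Ts k \<in> coherent_image" and "bounded_op T"
    and lim: "(\<lambda>k. onorm (\<lambda>x. Ts k x - T x)) \<longlonglongrightarrow> 0"
  shows "T \<in> coherent_image"
proof -
  have "\<forall>k. \<exists>u. coherent u \<and> Ts k = \<phi> u" using T unfolding coherent_image_def by blast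
  then obtain z where z: "\<And>k. coherent (z k)" and Ts: "\<And>k. Ts k = \<phi> (z k)"
    by (metis choice)
  have "bounded_linear (\<lambda>x. Ts k x - T x)" for k
    using bounded_op_add[OF phi_bounded bounded_op_scaleC[OF \<open>bounded_op T\<close>, of "-1"]]
    by (simp add: Ts bounded_op_bounded_linear scaleC_minus_left scaleC_one)
  hence pointwise: "(\<lambda>k. \<phi> (z k) h) \<longlonglongrightarrow> T h" for h
    using onorm_tendsto_0_imp_tendsto[OF _ lim] by (simp add: Ts)
  have "\<exists>m. (\<lambda>k. active_coeffs (z k) i) \<longlonglongrightarrow> m \<and> (active i \<longrightarrow> (\<forall>h. b i (T h) = scaleC m (b i h)))"
    for i
  proof (cases "active i")
    case True
    show ?thesis
      by (rule coherent_coeff_limit[OF z pointwise True]) (auto simp: active_coeffs_def True)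
  qed (auto simp: active_coeffs_def intro!: exI[of _ 0])
  then obtain g where g: "\<And>i. (\<lambda>k. active_coeffs (z k) i) \<longlonglongrightarrow> g i"
    and gb: "\<And>i h. active i \<Longrightarrow> b i (T h) = scaleC (g i) (b i h)"
    by (metis choice)
  obtain u where u: "coherent u" and gu: "g = active_coeffs u" by (rule active_coeffs_limit[OF z g])
  have "T h = \<phi> u h" for h
  proof -
    have "T h = (\<Sum>i<n. b i (T h))" by (simp add: sum_b)
    also have "\<dots> = (\<Sum>i<n. scaleC (\<omega> i u) (b i h))"
    proof (intro sum.cong refl)
      fix i assume "i \<in> {..<n}"
      thus "b i (T h) = scaleC (\<omega> i u) (b i h)"
        using gb[of i h] by (cases "b i = (\<lambda>h. 0)") (auto simp: gu active_coeffs_def active_def)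
    qed
    finally show ?thesis by (simp add: phi_apply)
  qed
  thus ?thesis using u unfolding coherent_image_def by auto
qed

lemma op_cstar_subalgebra_coherent_image: "op_cstar_subalgebra coherent_image"
  unfolding op_cstar_subalgebra_def
proof (intro conjI ballI allI impI)
  have image: "\<phi> z \<in> coherent_image" if "coherent z" for z
    using that by (simp add: coherent_image_def)
  show "bounded_op T" if "T \<in> coherent_image" for T
    using that phi_bounded by (auto simp: coherent_image_def)
  show "(\<lambda>x. 0) \<in> coherent_image"
    using image[OF coherent_zero] by (simp add: phi_zero)
  show "(\<lambda>x. S x + T x) \<in> coherent_image" "S \<circ> T \<in> coherent_image"
    if ST: "S \<in> coherent_image" "T \<in> coherent_image" for S T
  proof -
    obtain z w where zw: "coherent z" "coherent w" and "S = \<phi> z" "T = \<phi> w"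
      using ST unfolding coherent_image_def by blast
    hence "(\<lambda>x. S x + T x) = \<phi> (z + w)" "S \<circ> T = \<phi> (z * w)"
      by (simp_all add: fun_eq_iff phi_add phi_mult_left)
    thus "(\<lambda>x. S x + T x) \<in> coherent_image" "S \<circ> T \<in> coherent_image"
      using image[OF coherent_add[OF zw]] image[OF coherent_mult[OF zw]] by simp_all
  qed
  show "(\<lambda>x. scaleC c (T x)) \<in> coherent_image" if "T \<in> coherent_image" for c T
    using that image[OF coherent_scaleC] by (auto simp: coherent_image_def phi_scaleC[symmetric])
  show "\<exists>S\<in>coherent_image. \<forall>x y. cinner (T x) y = cinner x (S y)" if TC: "T \<in> coherent_image" for T
  proof -
    obtain z where "coherent z" "T = \<phi> z" using TC unfolding coherent_image_def by blast
    thus ?thesis using image[OF coherent_cstar] phi_adjoint by blast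
  qed
  show "T \<in> coherent_image"
    if "(\<forall>k. Ts k \<in> coherent_image) \<and> bounded_op T \<and> (\<lambda>k. onorm (\<lambda>x. Ts k x - T x)) \<longlonglongrightarrow> 0"
    for T Ts
    using that coherent_image_closed by blast
qed

lemma selfadjoint_coherent_image: "\<phi> ` definite_set \<phi> = {T \<in> coherent_image. op_selfadjoint T}"
proof (intro equalityI subsetI)
  fix T assume "T \<in> \<phi> ` definite_set \<phi>"
  thus "T \<in> {T \<in> coherent_image. op_selfadjoint T}"
    by (auto simp: definite_set_eq coherent_image_def phi_selfadjoint)
next
  fix T assume "T \<in> {T \<in> coherent_image. op_selfadjoint T}"
  then obtain z where z: "coherent z" and T: "T = \<phi> z" and sa: "op_selfadjoint (\<phi> z)"
    by (auto simp: coherent_image_def)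
  have "\<phi> (cstar z) = \<phi> z"
  proof (rule ext, rule cinner_ext_left)
    fix h y
    have "cinner (\<phi> (cstar z) h) y = cinner h (\<phi> z y)" by (simp add: phi_adjoint cstar_involutive)
    also have "\<dots> = cinner (\<phi> z h) y" using sa by (simp add: op_selfadjoint_def)
    finally show "cinner (\<phi> (cstar z) h) y = cinner (\<phi> z h) y" .
  qed
  hence "\<phi> (re_part z) h = scaleR (1/2) (\<phi> z h + \<phi> z h)" for h
    unfolding re_part_def scaleR_scaleC phi_scaleC phi_add by (simp add: scaleC_of_real)
  hence "\<phi> (re_part z) = T" by (simp add: fun_eq_iff T)
  moreover have "coherent (re_part z)"
    unfolding re_part_def scaleR_scaleC by (intro coherent_scaleC coherent_add z coherent_cstar)
  ultimately show "T \<in> \<phi> ` definite_set \<phi>"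
    by (auto simp: definite_set_eq cstar_re_part)
qed

lemma coherent_image_commute: "S \<in> coherent_image \<Longrightarrow> T \<in> coherent_image \<Longrightarrow> S \<circ> T = T \<circ> S"
  unfolding coherent_image_def using coherent_phi_commute by blast

lemma coherent_image_center: "coherent_image \<subseteq> center (vN_generated (range \<phi>))"
proof
  fix T assume "T \<in> coherent_image"
  then obtain z where z: "coherent z" and T: "T = \<phi> z" by (auto simp: coherent_image_def)
  have "\<phi> z \<in> commutant (range \<phi>)"
    unfolding commutant_def
  proof (intro CollectI conjI ballI)
    fix X assume "X \<in> range \<phi>"
    then obtain x where "X = \<phi> x" by blast
    thus "\<phi> z \<circ> X = X \<circ> \<phi> z" by (simp add: coherent_phi_commute[OF z])
  qed (rule phi_bounded)
  thus "T \<in> center (vN_generated (range \<phi>))" unfolding T by (intro center_vN_generatedI) simp_all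
qed

lemma phi_idempotent: "coherent e \<Longrightarrow> e * e = e \<Longrightarrow> \<phi> e \<circ> \<phi> e = \<phi> e"
  using phi_mult_left[of e e] by simp

lemma phi_sandwich: "coherent e \<Longrightarrow> \<phi> (e * x * e) = \<phi> e \<circ> \<phi> x \<circ> \<phi> e"
  by (simp add: phi_mult_right phi_mult_left comp_assoc)

lemma phi_compression_sum:
  assumes e: "coherent e" and ee: "e * e = e"
  shows "\<phi> x h = \<phi> (e * x * e) h + \<phi> ((1 - e) * x * (1 - e)) h"
proof -
  have f: "coherent (1 - e)" by (intro coherent_diff coherent_one e)
  have ff: "(1 - e) * (1 - e) = 1 - e" using ee by (simp add: algebra_simps)
  have compress: "\<phi> (p * x * p) h = \<phi> x (\<phi> p h)" if "coherent p" "p * p = p" for p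
    using fun_cong[OF coherent_phi_commute[OF that(1), of x], of "\<phi> p h"]
      fun_cong[OF phi_idempotent[OF that], of h]
    by (simp add: phi_sandwich[OF that(1)])
  have "\<phi> x h = \<phi> x (\<phi> e h + \<phi> (1 - e) h)"
    using fun_cong[OF phi_add[of e "1 - e"], of h] by (simp add: unital)
  also have "\<dots> = \<phi> (e * x * e) h + \<phi> ((1 - e) * x * (1 - e)) h"
    by (simp add: bounded_op_apply_add[OF phi_bounded] compress[OF e ee] compress[OF f ff])
  finally show ?thesis .
qed


lemma definite_projection_decomposition:
  assumes "cstar_projection e" and "e \<in> definite_set \<phi>"
  shows "op_projection (\<phi> e) \<and> op_projection (\<phi> (1 - e)) \<and>
    (\<forall>x. \<phi> x = (\<lambda>h. \<phi> (e * x * e) h + \<phi> ((1 - e) * x * (1 - e)) h) \<and>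
         (\<lambda>h. \<phi> (e * x * e) h + \<phi> ((1 - e) * x * (1 - e)) h)
           = (\<lambda>h. (\<phi> e \<circ> \<phi> x \<circ> \<phi> e) h + (\<phi> (1 - e) \<circ> \<phi> x \<circ> \<phi> (1 - e)) h))"
proof (intro conjI allI)
  have e: "coherent e" "cstar e = e" "e * e = e"
    using assms by (simp_all add: definite_set_eq cstar_projection_def)
  have f: "coherent (1 - e)" "cstar (1 - e) = 1 - e" "(1 - e) * (1 - e) = 1 - e"
    by (simp_all add: coherent_diff coherent_one e cstar_diff algebra_simps)
  have proj: "op_projection (\<phi> p)" if "coherent p" "cstar p = p" "p * p = p" for p
    using that phi_selfadjoint phi_idempotent by (simp add: op_projection_def)
  show "op_projection (\<phi> e)" "op_projection (\<phi> (1 - e))" using proj e f by simp_all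
  fix x
  show "\<phi> x = (\<lambda>h. \<phi> (e * x * e) h + \<phi> ((1 - e) * x * (1 - e)) h)"
    by (rule ext) (rule phi_compression_sum[OF e(1,3)])
  show "(\<lambda>h. \<phi> (e * x * e) h + \<phi> ((1 - e) * x * (1 - e)) h)
      = (\<lambda>h. (\<phi> e \<circ> \<phi> x \<circ> \<phi> e) h + (\<phi> (1 - e) \<circ> \<phi> x \<circ> \<phi> (1 - e)) h)"
    by (simp add: phi_sandwich e(1) f(1))
qed

lemma definite_image_algebra:
  "\<exists>C. op_cstar_subalgebra C \<and> (\<forall>S\<in>C. \<forall>T\<in>C. S \<circ> T = T \<circ> S) \<and>
    \<phi> ` definite_set \<phi> = {T\<in>C. op_selfadjoint T} \<and> C \<subseteq> center (vN_generated (range \<phi>))"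
  using op_cstar_subalgebra_coherent_image coherent_image_commute selfadjoint_coherent_image
    coherent_image_center by (intro exI[of _ coherent_image] conjI ballI)

lemma faithful_definite_set_abelian:
  assumes "faithful_map \<phi>"
  shows "\<exists>M. cstar_subalgebra M \<and> (\<forall>a\<in>M. \<forall>c\<in>M. a * c = c * a) \<and>
    definite_set \<phi> = {a\<in>M. cstar a = a}"
  using cstar_subalgebra_coherent coherent_commute_if_faithful[OF assms] definite_set_eq
  by (intro exI[of _ "Collect coherent"] conjI ballI) auto

end

theorem theorem3p1:
  fixes \<phi> :: "'a::cstar_algebra \<Rightarrow> 'h::chilbert_space \<Rightarrow> 'h"
    and n :: nat and \<omega> :: "nat \<Rightarrow> 'a \<Rightarrow> complex" and b :: "nat \<Rightarrow> 'h \<Rightarrow> 'h"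
    and e :: 'a
  assumes add: "\<And>x y. \<phi> (x + y) = (\<lambda>h. \<phi> x h + \<phi> y h)"
    and scal: "\<And>c x. \<phi> (scaleC c x) = (\<lambda>h. scaleC c (\<phi> x h))"
    and pos: "\<And>a. cstar_positive a \<Longrightarrow> op_positive (\<phi> a)"
    and unital: "\<phi> 1 = id"
    and states: "\<And>i. i < n \<Longrightarrow> is_state (\<omega> i)"
    and bpos: "\<And>i. i < n \<Longrightarrow> op_positive (b i)"
    and form: "\<And>x. \<phi> x = (\<lambda>h. \<Sum>i<n. scaleC (\<omega> i x) (b i h))"
    and eproj: "cstar_projection e"
    and eD: "e \<in> definite_set \<phi>"
  shows "op_projection (\<phi> e) \<and> op_projection (\<phi> (1 - e)) \<and>
    (\<forall>x. \<phi> x = (\<lambda>h. \<phi> (e * x * e) h + \<phi> ((1 - e) * x * (1 - e)) h) \<and>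
         (\<lambda>h. \<phi> (e * x * e) h + \<phi> ((1 - e) * x * (1 - e)) h)
           = (\<lambda>h. (\<phi> e \<circ> \<phi> x \<circ> \<phi> e) h + (\<phi> (1 - e) \<circ> \<phi> x \<circ> \<phi> (1 - e)) h)) \<and>
    (\<exists>C. op_cstar_subalgebra C \<and> (\<forall>S\<in>C. \<forall>T\<in>C. S \<circ> T = T \<circ> S) \<and>
         \<phi> ` definite_set \<phi> = {T\<in>C. op_selfadjoint T} \<and>
         C \<subseteq> center (vN_generated (range \<phi>))) \<and>
    (faithful_map \<phi> \<longrightarrow>
       (\<exists>M. cstar_subalgebra M \<and> (\<forall>a\<in>M. \<forall>c\<in>M. a * c = c * a) \<and>
            definite_set \<phi> = {a\<in>M. cstar a = a}))"
proof -
  interpret state_sum_map \<phi> n \<omega> b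
    using unital states bpos form by unfold_locales
  show ?thesis
    using definite_projection_decomposition[OF eproj eD] definite_image_algebra
      faithful_definite_set_abelian
    by blast
qed

end
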